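(* Let $0<y\le1$. For all $z=u+iv$ with $v>0$ and $1-\sqrt y\le|u|\le1+\sqrt y$, $$|z+ys_y(z)|\ge\frac{1}{1+\sqrt y}.$$
   Context: $s_y(z)$ is the Stieltjes transform of the symmetrized Marchenko–Pastur law with parameter $y$, i.e. $s_y(z)=\frac{-(z+\frac{y-1}{z})+\sqrt{(z+\frac{y-1}{z})^2-4y}}{2y}$ with the branch of the square root chosen so that $\operatorname{Im}s_y(z)>0$; it is the solution with positive imaginary part of $ys^2+(z+\frac{y-1}{z})s+1=0$. *)

theory Defs
  imports Complex_Main
begin

text \<open>Stieltjes transform of the symmetrized Marchenko--Pastur law with parameter y:
  the root with positive imaginary part of
  y s^2 + (z + (y-1)/z) s + 1 = 0.\<close>
definition s_MP :: "real \<Rightarrow> complex \<Rightarrow> complex" where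
  "s_MP y z = (THE s. Im s > 0 \<and>
      complex_of_real y * s^2 + (z + complex_of_real (y - 1) / z) * s + 1 = 0)"

end

theory Submission
  imports Defs
begin

text \<open>Put m = z + y s. The quadratic equation for s is equivalent to
  m + 1/m = z + (1 - y)/z. Suppose |m| < 1/(1 + \<surd>y) and write R = |m|^2 < 1.
  Comparing imaginary parts forces |z|^2 < 1 - y. Squaring the real and imaginary parts and
  adding them eliminates m and gives
  |z|^4 = (Re z)^2 (|z|^2 + 1 - y)^2 R/(1 + R)^2 + (Im z)^2 (|z|^2 - 1 + y)^2 R/(1 - R)^2,
  where R/(1 + R)^2 \<le> 1/4 and R/(1 - R)^2 < (1 + \<surd>y)/(4y). An elementary inequality,
  valid for (Re z)^2 \<ge> (1 - \<surd>y)^2 and |z|^2 \<le> 1 - y, bounds the right-hand side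
  with these weights by |z|^4, a contradiction.\<close>

lemma upper_half_mult_eq_pos_real_imp_real:
  fixes a b :: complex
  assumes "Im a \<ge> 0" "Im b \<ge> 0" "a * b = of_real r" "r > 0"
  shows "Im a = 0 \<and> Im b = 0"
proof -
  have a0: "a \<noteq> 0" using assms(3,4) by auto
  have "b * of_real ((cmod a)^2) = (a * b) * cnj a"
    by (simp only: complex_norm_square mult_ac)
  then have "b = of_real r * cnj a / of_real ((cmod a)^2)"
    using assms(3) a0 by (simp add: field_simps)
  then have "Im b = - r * Im a / (cmod a)^2"
    by (simp add: Im_divide power2_eq_square)
  then have "Im b \<le> 0" using assms(1,4) by (simp add: divide_nonpos_pos zero_less_mult_iff)
  then have "Im b = 0" using assms(2) by simp
  then show ?thesis using \<open>Im b = - r * Im a / (cmod a)^2\<close> a0 assms(4) by simp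
qed

lemma quadratic_root_shift_add_inverse:
  fixes z s Y :: "'a::field"
  assumes "z \<noteq> 0" "z + Y*s \<noteq> 0" "Y*s^2 + (z + (Y-1)/z)*s + 1 = 0"
  shows "(z + Y*s) + inverse (z + Y*s) = z + (1-Y) * inverse z"
proof -
  have "(z + Y*s) + inverse (z + Y*s) - (z + (1-Y) * inverse z)
      = Y * (Y*s^2 + (z + (Y-1)/z)*s + 1) / (z + Y*s)"
    using assms(1,2) by (simp add: field_simps power2_eq_square)
  then show ?thesis using assms(3) by (metis right_minus_eq div_0 mult_zero_right)
qed

lemma Re_add_scaled_inverse: "Re (m + of_real a * inverse m) = Re m * (1 + a / (cmod m)^2)"
  by (simp add: cmod_power2 Re_divide field_simps)

lemma Im_add_scaled_inverse: "Im (m + of_real a * inverse m) = Im m * (1 - a / (cmod m)^2)"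
  by (simp add: cmod_power2 Im_divide field_simps)

lemma quadratic_root_pair:
  fixes Y w :: complex
  assumes "Y \<noteq> 0"
  obtains s1 s2 where "Y*s1^2 + w*s1 + 1 = 0" "Y*s2^2 + w*s2 + 1 = 0"
    and "Y*(s1 + s2) = -w" and "Y*(s1*s2) = 1"
proof
  define d where "d = csqrt (w^2 - 4*Y)"
  have d2: "d^2 = w^2 - 4*Y" unfolding d_def by simp
  show "Y*((-w + d)/(2*Y))^2 + w*((-w + d)/(2*Y)) + 1 = 0"
    using assms d2 by (simp add: field_simps power2_eq_square) algebra
  show "Y*((-w - d)/(2*Y))^2 + w*((-w - d)/(2*Y)) + 1 = 0"
    using assms d2 by (simp add: field_simps power2_eq_square) algebra
  show "Y*((-w + d)/(2*Y) * ((-w - d)/(2*Y))) = 1"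
    using assms d2 by (simp add: field_simps power2_eq_square) algebra
  show "Y*((-w + d)/(2*Y) + (-w - d)/(2*Y)) = -w"
    using assms by (simp add: field_simps)
qed

lemma quadratic_unique_root_upper_half_plane:
  fixes y :: real and w :: complex
  assumes "y > 0" and "Im w > 0"
  shows "\<exists>!s. Im s > 0 \<and> of_real y * s^2 + w*s + 1 = 0"
proof (rule ex_ex1I)
  have Y0: "complex_of_real y \<noteq> 0" using assms(1) by simp
  obtain s1 s2 where roots: "of_real y*s1^2 + w*s1 + 1 = 0" "of_real y*s2^2 + w*s2 + 1 = 0"
    and sum: "of_real y*(s1 + s2) = -w" and prod: "of_real y*(s1*s2) = 1"
    using quadratic_root_pair[OF Y0] by blast
  have "Im s1 > 0 \<or> Im s2 > 0"
  proof (rule ccontr)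
    assume "\<not> ?thesis"
    moreover have "(-s1) * (-s2) = of_real (1/y)" using prod Y0 by (simp add: field_simps)
    ultimately have "Im s1 = 0" "Im s2 = 0"
      using upper_half_mult_eq_pos_real_imp_real[of "-s1" "-s2" "1/y"] assms(1) by auto
    then show False using arg_cong[OF sum, of Im] assms(2) by simp
  qed
  then show "\<exists>s. Im s > 0 \<and> of_real y * s^2 + w*s + 1 = 0" using roots by blast
next
  fix a b
  assume a: "Im a > 0 \<and> of_real y * a^2 + w*a + 1 = 0"
    and b: "Im b > 0 \<and> of_real y * b^2 + w*b + 1 = 0"
  show "a = b"
  proof (rule ccontr)
    assume "a \<noteq> b"
    moreover have "(a - b) * (of_real y * (a + b) + w) = 0"
      using a b by (simp add: algebra_simps power2_eq_square) (metis add_diff_cancel_left' diff_add_cancel diff_diff_add)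
    ultimately have "w = - of_real y * (a + b)" by (simp add: eq_neg_iff_add_eq_0 add.commute)
    then have "of_real y * (a * b) = 1" using a by algebra
    then have "a * b = of_real (1/y)" using assms(1) by (simp add: field_simps)
    then have "Im a = 0"
      using upper_half_mult_eq_pos_real_imp_real[of a b "1/y"] a b assms(1) by simp
    then show False using a by simp
  qed
qed

lemma s_MP_root:
  assumes "0 < y" and "y \<le> 1" and "Im z > 0"
  shows "Im (s_MP y z) > 0"
    and "of_real y * (s_MP y z)^2 + (z + of_real (y - 1) / z) * s_MP y z + 1 = 0"
proof -
  have "Im (of_real (y - 1) / z) = (1 - y) * Im z / (cmod z)^2"
    by (simp add: Im_divide cmod_power2 field_simps)
  also have "\<dots> \<ge> 0" using assms(2,3) by simp
  finally have "Im (z + of_real (y - 1) / z) > 0" using assms(3) by simp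
  from theI'[OF quadratic_unique_root_upper_half_plane[OF assms(1) this]]
  show "Im (s_MP y z) > 0"
    and "of_real y * (s_MP y z)^2 + (z + of_real (y - 1) / z) * s_MP y z + 1 = 0"
    unfolding s_MP_def by auto
qed

lemma square_add_le_four_mult:
  fixes c Z :: real
  assumes "0 \<le> c" "c \<le> 1" "(1 - c)^2 \<le> Z" "Z \<le> 1 - c^2"
  shows "(Z + (1 - c^2))^2 / 4 \<le> Z"
proof -
  have "0 \<le> 1 - c^2 - Z" "1 - c^2 - Z \<le> 2*c*(1 - c)"
    using assms(3,4) by (simp_all add: power2_eq_square algebra_simps)
  then have "(1 - c^2 - Z)^2 \<le> (2*c*(1 - c))^2" by (simp add: power_mono)
  also have "\<dots> = 4*c^2*(1 - c)^2" by (simp add: power_mult_distrib)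
  also have "\<dots> \<le> 4*c^2*Z" using assms(3) by (simp add: mult_left_mono)
  finally have "(1 - c^2 - Z)^2 \<le> 4*c^2*Z" .
  moreover have "(Z + (1 - c^2))^2 = (1 - c^2 - Z)^2 + 4*Z*(1 - c^2)"
    by (simp add: power2_eq_square algebra_simps)
  ultimately show ?thesis by (simp add: algebra_simps)
qed

lemma weighted_bound_at_endpoint:
  fixes c Z :: real
  assumes "0 < c" "c < 1" "(1 - c)^2 \<le> Z" "Z \<le> 1 - c^2"
  shows "(1 - c)^2 * ((Z + (1 - c^2))^2 / 4)
      + (Z - (1 - c)^2) * ((Z - (1 - c^2))^2 * ((1 + c) / (4*c^2))) \<le> Z^2"
proof -
  \<comment> \<open>t parametrises the interval [(1 - c)^2, 1 - c^2] affinely by [0, 1].\<close>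
  define t where "t = (Z - (1 - c)^2) / (2*c*(1 - c))"
  have cc: "2*c*(1 - c) > 0" using assms(1,2) by simp
  have "2*c*(1 - c)*t = Z - (1 - c)^2" using assms(1,2) by (simp add: t_def)
  then have Zt: "Z = (1 - c)*(1 - c + 2*c*t)" by (simp add: power2_eq_square algebra_simps)
  have t0: "0 \<le> t" unfolding t_def using assms(3) cc by simp
  have t1: "t \<le> 1" unfolding t_def using assms(4) cc by (simp add: field_simps power2_eq_square)
  have "(1 - c)^2 * ((Z + (1 - c^2))^2 / 4)
      + (Z - (1 - c)^2) * ((Z - (1 - c^2))^2 * ((1 + c) / (4*c^2)))
      = (1 - c)^2 * ((1 - c)^2*(1 + c*t)^2 + 2*c*(1 - c)*(1 + c)*t*(1 - t)^2)"
    unfolding Zt using assms(1) by (simp add: field_simps power2_eq_square)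
  also have "\<dots> \<le> (1 - c)^2 * (1 - c + 2*c*t)^2"
  proof (rule mult_left_mono)
    have "(1 - c + 2*c*t)^2 - ((1 - c)^2*(1 + c*t)^2 + 2*c*(1 - c)*(1 + c)*t*(1 - t)^2)
        = c*t*(2*(1 - c)*(1 + c)*t*(2 - t) + c*t*((1 + c)*(3 - c)))"
      by (simp add: power2_eq_square algebra_simps)
    moreover have "0 \<le> c*t*(2*(1 - c)*(1 + c)*t*(2 - t) + c*t*((1 + c)*(3 - c)))"
      using assms(1,2) t0 t1 by (intro mult_nonneg_nonneg add_nonneg_nonneg) auto
    ultimately show "(1 - c)^2*(1 + c*t)^2 + 2*c*(1 - c)*(1 + c)*t*(1 - t)^2 \<le> (1 - c + 2*c*t)^2"
      by linarith
  qed simp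
  also have "\<dots> = Z^2" unfolding Zt by (simp add: power_mult_distrib)
  finally show ?thesis .
qed

lemma weighted_bound:
  fixes c U V Z :: real
  assumes "0 < c" "c < 1" "(1 - c)^2 \<le> U" "0 \<le> V" "Z = U + V" "Z \<le> 1 - c^2"
  shows "U * ((Z + (1 - c^2))^2 / 4) + V * ((Z - (1 - c^2))^2 * ((1 + c) / (4*c^2))) \<le> Z^2"
proof -
  define A where "A = (Z + (1 - c^2))^2 / 4"
  define B where "B = (Z - (1 - c^2))^2 * ((1 + c) / (4*c^2))"
  have Zl: "(1 - c)^2 \<le> Z" using assms(3-5) by linarith
  \<comment> \<open>For fixed Z the left side is affine in U, so it suffices to check U = Z and U = (1-c)^2.\<close>
  show ?thesis
  proof (cases "B \<le> A")
    case True
    have "U*A + V*B \<le> Z*A" using True assms(4,5) by (simp add: mult_right_mono algebra_simps)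
    also have "\<dots> \<le> Z*Z"
    proof (rule mult_left_mono)
      show "A \<le> Z" unfolding A_def using square_add_le_four_mult[of c Z] assms Zl by simp
      show "0 \<le> Z" using Zl by (meson order.trans zero_le_power2)
    qed
    finally show ?thesis by (simp add: A_def B_def power2_eq_square)
  next
    case False
    have "U*A + V*B = (1 - c)^2*A + (Z - (1 - c)^2)*B + (U - (1 - c)^2)*(A - B)"
      using assms(5) by (simp add: algebra_simps)
    also have "\<dots> \<le> (1 - c)^2*A + (Z - (1 - c)^2)*B"
      using False assms(3) by (simp add: mult_nonneg_nonpos)
    also have "\<dots> \<le> Z^2"
      using weighted_bound_at_endpoint[OF assms(1,2) Zl assms(6)] by (simp add: A_def B_def)
    finally show ?thesis by (simp add: A_def B_def)
  qed
qed

lemma ratio_le_quarter: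
  fixes R :: real
  assumes "0 \<le> R"
  shows "R / (R + 1)^2 \<le> 1/4"
proof -
  have "4*R \<le> (R + 1)^2" using zero_le_power2[of "R - 1"] by (simp add: power2_eq_square algebra_simps)
  then show ?thesis using assms by (simp add: divide_le_eq)
qed

lemma ratio_lt_bound:
  fixes c R :: real
  assumes "0 < c" "0 \<le> R" "R < 1 / (1 + c)^2"
  shows "R / (1 - R)^2 < (1 + c) / (4*c^2)"
proof -
  define r where "r = 1 / (1 + c)^2"
  have "1 < (1 + c)^2" using assms(1) by (simp add: power2_eq_square algebra_simps add_pos_pos)
  then have r_lt1: "r < 1" by (simp add: r_def divide_less_eq)
  have R_lt1: "R < 1" using assms(3) r_lt1 by (simp add: r_def)
  have "4*c^2*R < 4*c^2*r" using assms(1,3) unfolding r_def by (intro mult_strict_left_mono) auto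
  also have "\<dots> \<le> (1 + c)*(1 - r)^2"
  proof -
    \<comment> \<open>Cleared of denominators, this is 4(1 + c) \<le> (2 + c)^2.\<close>
    have "4*c^2*r*(1 + c)^4 = 4*c^2*(1 + c)^2" by (simp add: r_def power2_eq_square power4_eq_xxxx)
    also have "\<dots> \<le> (1 + c)*c^2*(2 + c)^2"
      using assms(1) by (simp add: power2_eq_square algebra_simps mult_left_mono)
    also have "\<dots> = (1 + c)*((1 + c)^2 - 1)^2" by (simp add: power2_eq_square algebra_simps)
    also have "\<dots> = (1 + c)*((1 - r)*(1 + c)^2)^2"
      using assms(1) by (simp add: r_def left_diff_distrib)
    also have "\<dots> = (1 + c)*(1 - r)^2*(1 + c)^4"
      by (simp add: power_mult_distrib flip: power_mult)
    finally show ?thesis using assms(1) by simp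
  qed
  also have "\<dots> \<le> (1 + c)*(1 - R)^2"
    using assms(1,3) r_lt1 by (intro mult_left_mono) (simp_all add: r_def power_mono)
  finally have "4*c^2*R < (1 + c)*(1 - R)^2" .
  then show ?thesis using assms(1) R_lt1 by (simp add: field_simps)
qed

lemma shifted_system_no_small_solution:
  fixes c u v p q :: real
  assumes c: "0 < c" "c \<le> 1" and v: "0 < v" and u: "(1 - c)^2 \<le> u^2" and q: "0 < q"
    and small: "p^2 + q^2 < 1 / (1 + c)^2"
    and re: "p * (1 + 1 / (p^2 + q^2)) = u * (1 + (1 - c^2) / (u^2 + v^2))"
    and im: "q * (1 - 1 / (p^2 + q^2)) = v * (1 - (1 - c^2) / (u^2 + v^2))"
  shows False
proof -
  define R where "R = p^2 + q^2"
  define Z where "Z = u^2 + v^2"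
  define K where "K = (1 + c) / (4*c^2)"
  have R0: "0 < R" unfolding R_def using q by (simp add: add_nonneg_pos)
  have Z0: "0 < Z" unfolding Z_def using v by (simp add: add_nonneg_pos)
  have "1 < (1 + c)^2" using c(1) by (simp add: power2_eq_square algebra_simps add_pos_pos)
  then have "1 / (1 + c)^2 < 1" by (simp add: divide_less_eq)
  then have R1: "R < 1" using small unfolding R_def by linarith
  have re': "p*(R + 1)*Z = u*(Z + (1 - c^2))*R"
    using re[folded R_def Z_def] R0 Z0 by (simp add: field_simps)
  have im': "q*(R - 1)*Z = v*(Z - (1 - c^2))*R"
    using im[folded R_def Z_def] R0 Z0 by (simp add: field_simps)
  have "q*(R - 1)*Z < 0" using q R1 Z0 by (simp add: mult_neg_pos mult_pos_neg)
  then have "v*(Z - (1 - c^2)) < 0" using im' R0 by (simp add: mult_less_0_iff)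
  then have Zs: "Z < 1 - c^2" using v by (simp add: mult_less_0_iff)
  then have c1: "c < 1" using Z0 c(2) by (cases "c = 1") auto
  \<comment> \<open>Squaring both equations and adding them eliminates p and q.\<close>
  have "p^2*Z^2 = u^2*(Z + (1 - c^2))^2*R*(R/(R + 1)^2)"
  proof -
    have "p^2*Z^2*(R + 1)^2 = u^2*(Z + (1 - c^2))^2*R^2"
      using arg_cong[OF re', of "\<lambda>x. x^2"] by (simp add: power_mult_distrib mult_ac)
    moreover have "(R + 1)^2 > 0" using R0 by simp
    ultimately have "p^2*Z^2 = u^2*(Z + (1 - c^2))^2*R^2 / (R + 1)^2" by (simp add: eq_divide_eq)
    then show ?thesis by (simp add: power2_eq_square)
  qed
  moreover have "q^2*Z^2 = v^2*(Z - (1 - c^2))^2*R*(R/(1 - R)^2)"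
  proof -
    have "q^2*Z^2*(1 - R)^2 = v^2*(Z - (1 - c^2))^2*R^2"
      using arg_cong[OF im', of "\<lambda>x. x^2"] by (simp add: power_mult_distrib mult_ac power2_commute)
    moreover have "(1 - R)^2 > 0" using R1 by simp
    ultimately have "q^2*Z^2 = v^2*(Z - (1 - c^2))^2*R^2 / (1 - R)^2" by (simp add: eq_divide_eq)
    then show ?thesis by (simp add: power2_eq_square)
  qed
  moreover have "R*Z^2 = p^2*Z^2 + q^2*Z^2" unfolding R_def by (simp add: algebra_simps)
  ultimately have "R*Z^2 = R*(u^2*(Z + (1 - c^2))^2*(R/(R + 1)^2) + v^2*(Z - (1 - c^2))^2*(R/(1 - R)^2))"
    by (simp add: distrib_left mult_ac)
  then have "Z^2 = u^2*(Z + (1 - c^2))^2*(R/(R + 1)^2) + v^2*(Z - (1 - c^2))^2*(R/(1 - R)^2)"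
    using R0 by simp
  also have "\<dots> < u^2*(Z + (1 - c^2))^2*(1/4) + v^2*(Z - (1 - c^2))^2*K"
  proof (rule add_le_less_mono)
    show "u^2*(Z + (1 - c^2))^2*(R/(R + 1)^2) \<le> u^2*(Z + (1 - c^2))^2*(1/4)"
      using ratio_le_quarter[of R] R0 by (intro mult_left_mono) auto
    show "v^2*(Z - (1 - c^2))^2*(R/(1 - R)^2) < v^2*(Z - (1 - c^2))^2*K"
      using ratio_lt_bound[of c R] c R0 small v Zs
      by (intro mult_strict_left_mono) (auto simp: K_def R_def)
  qed
  also have "\<dots> \<le> Z^2"
    using weighted_bound[of c "u^2" "v^2" Z] c c1 u Zs by (simp add: Z_def K_def)
  finally show False by simp
qed

theorem mainTheorem12:
  fixes y :: real and z :: complex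
  assumes "0 < y" and "y \<le> 1"
    and "Im z > 0"
    and "1 - sqrt y \<le> \<bar>Re z\<bar>" and "\<bar>Re z\<bar> \<le> 1 + sqrt y"
  shows "cmod (z + complex_of_real y * s_MP y z) \<ge> 1 / (1 + sqrt y)"
proof (rule ccontr)
  define c where "c = sqrt y"
  define s where "s = s_MP y z"
  define m where "m = z + of_real y * s"
  have c: "0 < c" "c \<le> 1" "y = c^2" using assms(1,2) by (simp_all add: c_def)
  have "Im s > 0" "of_real y * s^2 + (z + (of_real y - 1) / z) * s + 1 = 0"
    using s_MP_root[OF assms(1-3)] by (simp_all add: s_def)
  moreover have "z \<noteq> 0" using assms(3) by auto
  moreover have "Im m > 0" using \<open>Im s > 0\<close> assms(1,3) by (simp add: m_def add_pos_pos)
  moreover have "m \<noteq> 0" using \<open>Im m > 0\<close> by auto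
  ultimately have "m + inverse m = z + of_real (1 - y) * inverse z"
    using quadratic_root_shift_add_inverse[of z "of_real y" s] by (auto simp: m_def)
  from arg_cong[OF this, of Re] arg_cong[OF this, of Im]
  have "Re m * (1 + 1 / (Re m^2 + Im m^2)) = Re z * (1 + (1 - c^2) / (Re z^2 + Im z^2))"
    and "Im m * (1 - 1 / (Re m^2 + Im m^2)) = Im z * (1 - (1 - c^2) / (Re z^2 + Im z^2))"
    using Re_add_scaled_inverse[of m 1] Im_add_scaled_inverse[of m 1]
      Re_add_scaled_inverse[of z "1 - y"] Im_add_scaled_inverse[of z "1 - y"]
    by (simp_all add: cmod_power2 c(3))
  moreover have "(1 - c)^2 \<le> Re z^2"
    using assms(4) c(2) power_mono[of "1 - c" "\<bar>Re z\<bar>" 2] by (simp add: c_def)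
  moreover assume "\<not> ?thesis"
  then have "cmod m < 1 / (1 + c)" by (simp add: m_def s_def c_def)
  then have "Re m^2 + Im m^2 < 1 / (1 + c)^2"
    using power_strict_mono[of "cmod m" "1 / (1 + c)" 2] by (simp add: cmod_power2 power_divide)
  ultimately show False
    using shifted_system_no_small_solution[OF c(1,2) assms(3)] \<open>Im m > 0\<close> by blast
qed

end
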